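(* Let $\Gamma$ be a semigroupoid with object set $S$, $\tau\colon S\to X$ a map, and for $\gamma\in\Gamma$ let $L(\gamma)$ be the densely defined operator from $\ell^2_\tau(\Gamma;\tau(d(\gamma)))$ to $\ell^2_\tau(\Gamma;\tau(c(\gamma)))$ whose domain is the finitely supported functions, given by $L(\gamma)\delta_\beta=\delta_{\gamma\beta}$ if $c(\beta)=d(\gamma)$ and $L(\gamma)\delta_\beta=0$ otherwise. Let $m_\gamma\colon\Gamma^{d(\gamma)}\to\Gamma^{c(\gamma)}$, $m_\gamma(\alpha)=\gamma\alpha$. Then: (i) for $\beta\in\Gamma^{c(\gamma)}$, $\delta_\beta\in\mathrm{dom}\,L(\gamma)^*$ if $m_\gamma^{-1}(\{\beta\})$ is finite, while if $m_\gamma^{-1}(\{\beta\})$ is infinite then every vector of $\mathrm{dom}\,L(\gamma)^*$ is orthogonal to $\delta_\beta$; consequently $L(\gamma)$ is closable if and only if $m_\gamma^{-1}(\{\beta\})$ is finite for every $\beta\in\Gamma^{c(\gamma)}$. (ii) $L(\gamma)$ is bounded if and only if there is $N\in\mathbb N$ with $|m_\gamma^{-1}(\{\beta\})|\le N$ for all $\beta\in\Gamma^{c(\gamma)}$, and in that case $\|L(\gamma)\|\le N$. (iii) If $\Gamma$ satisfies: for every $\gamma\in\Gamma$ and $\beta\ne\beta'$ in $\Gamma^{d(\gamma)}$, $\gamma\beta\ne\gamma\beta'$, then each $L(\gamma)$ extends to a partial isometry and $(\tau;L)$ is an orthogonal representation of $\Gamma$ on $\{\ell^2_\tau(\Gamma;x)\}_{x\in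 X}$.
   Context: A semigroupoid $(\Gamma;S;d;c;\cdot)$ consists of nonempty sets $\Gamma,S$, maps $d,c\colon\Gamma\to S$, and for all $\alpha,\beta$ with $d(\alpha)=c(\beta)$ a product $\alpha\beta$ with $d(\alpha\beta)=d(\beta)$, $c(\alpha\beta)=c(\alpha)$, associative whenever defined; $\Gamma^s=\{\alpha:c(\alpha)=s\}$. For $x\in X$, $\ell^2_\tau(\Gamma;x)$ is the Hilbert space with orthonormal basis $\{\delta_\gamma:\gamma\in\Gamma,\ \tau(c(\gamma))=x\}$ (the zero space if this set is empty). A representation of $\Gamma$ on a family of Hilbert spaces $\{\mathcal H_x\}_{x\in X}$ with aggregation $\tau$ is a map $\Phi$ with $\Phi(\alpha)\in\mathcal B(\mathcal H_{\tau(d(\alpha))},\mathcal H_{\tau(c(\alpha))})$ and $\Phi(\alpha\beta)=\Phi(\alpha)\Phi(\beta)$ whenever $d(\alpha)=c(\beta)$; it is orthogonal if whenever $\tau(c(\alpha))=\tau(c(\beta))$ but $c(\alpha)\ne c(\beta)$, the ranges $\Phi(\alpha)\mathcal H_{\tau(d(\alpha))}$ and $\Phi(\beta)\mathcal H_{\tau(d(\beta))}$ are orthogonal. *)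

theory Defs
  imports "HOL-Analysis.Analysis"
begin

definition semigroupoid ::
  "'g set \<Rightarrow> 's set \<Rightarrow> ('g \<Rightarrow> 's) \<Rightarrow> ('g \<Rightarrow> 's) \<Rightarrow> ('g \<Rightarrow> 'g \<Rightarrow> 'g) \<Rightarrow> bool" where
  "semigroupoid \<Gamma> S d c pr \<longleftrightarrow>
     \<Gamma> \<noteq> {} \<and> S \<noteq> {} \<and> d ` \<Gamma> \<subseteq> S \<and> c ` \<Gamma> \<subseteq> S \<and>
     (\<forall>\<alpha>\<in>\<Gamma>. \<forall>\<beta>\<in>\<Gamma>. d \<alpha> = c \<beta> \<longrightarrow>
        pr \<alpha> \<beta> \<in> \<Gamma> \<and> d (pr \<alpha> \<beta>) = d \<beta> \<and> c (pr \<alpha> \<beta>) = c \<alpha>) \<and>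
     (\<forall>\<alpha>\<in>\<Gamma>. \<forall>\<beta>\<in>\<Gamma>. \<forall>\<gamma>\<in>\<Gamma>. d \<alpha> = c \<beta> \<and> d \<beta> = c \<gamma> \<longrightarrow>
        pr (pr \<alpha> \<beta>) \<gamma> = pr \<alpha> (pr \<beta> \<gamma>))"

definition fibre :: "'g set \<Rightarrow> ('g \<Rightarrow> 's) \<Rightarrow> 's \<Rightarrow> 'g set" where
  "fibre \<Gamma> c s = {\<alpha> \<in> \<Gamma>. c \<alpha> = s}"

definition mpre :: "'g set \<Rightarrow> ('g \<Rightarrow> 's) \<Rightarrow> ('g \<Rightarrow> 's) \<Rightarrow> ('g \<Rightarrow> 'g \<Rightarrow> 'g) \<Rightarrow> 'g \<Rightarrow> 'g \<Rightarrow> 'g set" where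
  "mpre \<Gamma> d c pr \<gamma> \<beta> = {\<alpha> \<in> fibre \<Gamma> c (d \<gamma>). pr \<gamma> \<alpha> = \<beta>}"

definition ell2 :: "'g set \<Rightarrow> ('g \<Rightarrow> 's) \<Rightarrow> ('s \<Rightarrow> 'x) \<Rightarrow> 'x \<Rightarrow> ('g \<Rightarrow> complex) set" where
  "ell2 \<Gamma> c \<tau> x = {f. (\<forall>\<gamma>. f \<gamma> \<noteq> 0 \<longrightarrow> \<gamma> \<in> \<Gamma> \<and> \<tau> (c \<gamma>) = x) \<and>
                         (\<lambda>\<gamma>. (cmod (f \<gamma>))\<^sup>2) summable_on UNIV}"

definition l2inner :: "('g \<Rightarrow> complex) \<Rightarrow> ('g \<Rightarrow> complex) \<Rightarrow> complex" where
  "l2inner f g = (\<Sum>\<^sub>\<infinity>\<gamma>. cnj (f \<gamma>) * g \<gamma>)"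

definition l2norm :: "('g \<Rightarrow> complex) \<Rightarrow> real" where
  "l2norm f = sqrt (\<Sum>\<^sub>\<infinity>\<gamma>. (cmod (f \<gamma>))\<^sup>2)"

definition delta :: "'g \<Rightarrow> 'g \<Rightarrow> complex" where
  "delta \<beta> = (\<lambda>\<alpha>. if \<alpha> = \<beta> then 1 else 0)"

definition adj_dom :: "('a \<Rightarrow> complex) set \<Rightarrow> ('b \<Rightarrow> complex) set \<Rightarrow> ('a \<Rightarrow> complex) set
     \<Rightarrow> (('a \<Rightarrow> complex) \<Rightarrow> ('b \<Rightarrow> complex)) \<Rightarrow> ('b \<Rightarrow> complex) set" where
  "adj_dom H1 H2 D T = {y \<in> H2. \<exists>z \<in> H1. \<forall>x \<in> D. l2inner y (T x) = l2inner z x}"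

definition graph_closure :: "('a \<Rightarrow> complex) set \<Rightarrow> ('b \<Rightarrow> complex) set \<Rightarrow> ('a \<Rightarrow> complex) set
     \<Rightarrow> (('a \<Rightarrow> complex) \<Rightarrow> ('b \<Rightarrow> complex)) \<Rightarrow> (('a \<Rightarrow> complex) \<times> ('b \<Rightarrow> complex)) set" where
  "graph_closure H1 H2 D T = {(x, y). x \<in> H1 \<and> y \<in> H2 \<and>
      (\<exists>xs. (\<forall>n. xs n \<in> D) \<and> (\<lambda>n. l2norm (\<lambda>i. xs n i - x i)) \<longlonglongrightarrow> 0 \<and>
            (\<lambda>n. l2norm (\<lambda>i. T (xs n) i - y i)) \<longlonglongrightarrow> 0)}"

definition closable_op where
  "closable_op H1 H2 D T \<longleftrightarrow>
     (\<forall>x y y'. (x, y) \<in> graph_closure H1 H2 D T \<and> (x, y') \<in> graph_closure H1 H2 D T \<longrightarrow> y = y')"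

definition bounded_op :: "('a \<Rightarrow> complex) set \<Rightarrow> (('a \<Rightarrow> complex) \<Rightarrow> ('b \<Rightarrow> complex)) \<Rightarrow> bool" where
  "bounded_op D T \<longleftrightarrow> (\<exists>C. \<forall>x \<in> D. l2norm (T x) \<le> C * l2norm x)"

definition op_norm :: "('a \<Rightarrow> complex) set \<Rightarrow> (('a \<Rightarrow> complex) \<Rightarrow> ('b \<Rightarrow> complex)) \<Rightarrow> real" where
  "op_norm D T = Sup {l2norm (T x) | x. x \<in> D \<and> l2norm x \<le> 1}"

definition bounded_linear_on where
  "bounded_linear_on H1 H2 V \<longleftrightarrow>
     (\<forall>f \<in> H1. V f \<in> H2) \<and>
     (\<forall>f \<in> H1. \<forall>g \<in> H1. \<forall>a::complex. V (\<lambda>i. a * f i + g i) = (\<lambda>j. a * V f j + V g j)) \<and>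
     (\<exists>C. \<forall>f \<in> H1. l2norm (V f) \<le> C * l2norm f)"

definition partial_isometry where
  "partial_isometry H1 H2 V \<longleftrightarrow> bounded_linear_on H1 H2 V \<and>
     (\<forall>f \<in> H1. (\<forall>k \<in> H1. V k = (\<lambda>_. 0) \<longrightarrow> l2inner k f = 0) \<longrightarrow> l2norm (V f) = l2norm f)"

definition Ldom where
  "Ldom \<Gamma> d c \<tau> \<gamma> = {f \<in> ell2 \<Gamma> c \<tau> (\<tau> (d \<gamma>)). finite {\<alpha>. f \<alpha> \<noteq> 0}}"

text \<open>Linear extension of \<open>\<delta>_\<beta> \<mapsto> \<delta>_{\<gamma>\<beta>}\<close> (if \<open>c \<beta> = d \<gamma>\<close>), \<open>\<delta>_\<beta> \<mapsto> 0\<close> otherwise.\<close>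
definition Lop :: "'g set \<Rightarrow> ('g \<Rightarrow> 's) \<Rightarrow> ('g \<Rightarrow> 's) \<Rightarrow> ('g \<Rightarrow> 'g \<Rightarrow> 'g) \<Rightarrow> 'g
     \<Rightarrow> ('g \<Rightarrow> complex) \<Rightarrow> ('g \<Rightarrow> complex)" where
  "Lop \<Gamma> d c pr \<gamma> f = (\<lambda>\<eta>. \<Sum>\<alpha> \<in> {\<alpha> \<in> mpre \<Gamma> d c pr \<gamma> \<eta>. f \<alpha> \<noteq> 0}. f \<alpha>)"

definition is_representation where
  "is_representation \<Gamma> d c pr H \<tau> \<Phi> \<longleftrightarrow>
     (\<forall>\<alpha> \<in> \<Gamma>. bounded_linear_on (H (\<tau> (d \<alpha>))) (H (\<tau> (c \<alpha>))) (\<Phi> \<alpha>)) \<and>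
     (\<forall>\<alpha> \<in> \<Gamma>. \<forall>\<beta> \<in> \<Gamma>. d \<alpha> = c \<beta> \<longrightarrow>
        (\<forall>f \<in> H (\<tau> (d \<beta>)). \<Phi> (pr \<alpha> \<beta>) f = \<Phi> \<alpha> (\<Phi> \<beta> f)))"

definition is_orthogonal_rep where
  "is_orthogonal_rep \<Gamma> d c pr H \<tau> \<Phi> \<longleftrightarrow> is_representation \<Gamma> d c pr H \<tau> \<Phi> \<and>
     (\<forall>\<alpha> \<in> \<Gamma>. \<forall>\<beta> \<in> \<Gamma>. \<tau> (c \<alpha>) = \<tau> (c \<beta>) \<and> c \<alpha> \<noteq> c \<beta> \<longrightarrow>
        (\<forall>f \<in> H (\<tau> (d \<alpha>)). \<forall>g \<in> H (\<tau> (d \<beta>)). l2inner (\<Phi> \<alpha> f) (\<Phi> \<beta> g) = 0))"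

end

theory Submission
  imports Defs "HOL-Real_Asymp.Real_Asymp"
begin

text \<open>
  On a finitely supported \<open>x\<close> the operator acts by summing over the fibres of \<open>m\<^sub>\<gamma>\<close>:
  \<open>(L(\<gamma>) x)(\<eta>) = \<Sum>\<^bsub>\<alpha> \<in> m\<^sub>\<gamma>\<^sup>-\<^sup>1({\<eta>})\<^esub> x(\<alpha>)\<close>. Hence \<open>\<langle>\<delta>\<^sub>\<beta>, L(\<gamma>) x\<rangle>\<close> is the inner
  product of \<open>x\<close> with the indicator of \<open>m\<^sub>\<gamma>\<^sup>-\<^sup>1({\<beta>})\<close>, which is square summable iff the fibre
  is finite. For an infinite fibre any adjoint vector is constant on it, hence zero there, and
  normalised indicators of ever larger finite subsets of the fibre tend to \<open>0\<close> while all being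
  mapped to \<open>\<delta>\<^sub>\<beta>\<close>, so the graph closure is not a graph; for finite fibres limits in the graph
  closure are determined coordinatewise. The Cauchy-Schwarz inequality on each fibre gives
  \<open>\<parallel>L(\<gamma>) x\<parallel>\<^sup>2 \<le> N \<parallel>x\<parallel>\<^sup>2\<close> when all fibres have at most \<open>N\<close> elements, and testing on indicators
  of subsets of one fibre bounds the fibre sizes by \<open>\<parallel>L(\<gamma>)\<parallel>\<^sup>2\<close>. Under left cancellation \<open>m\<^sub>\<gamma>\<close> is
  injective, so \<open>L(\<gamma>)\<close> is an isometry on \<open>\<ell>\<^sup>2(\<Gamma>\<^bsup>d(\<gamma>)\<^esup>)\<close> and vanishes on its orthogonal complement;
  associativity makes the fibres of \<open>m\<^sub>\<alpha>\<^sub>\<beta>\<close> unions of fibres of \<open>m\<^sub>\<beta>\<close>, which gives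
  multiplicativity, and ranges of \<open>L(\<alpha>)\<close> lie in \<open>\<ell>\<^sup>2(\<Gamma>\<^bsup>c(\<alpha>)\<^esup>)\<close>, which gives orthogonality.
\<close>

lemma
  fixes f :: "'a \<Rightarrow> complex"
  assumes "finite A" and "\<And>i. i \<notin> A \<Longrightarrow> f i = 0"
  shows square_summable_finite_support: "(\<lambda>i. (cmod (f i))\<^sup>2) summable_on UNIV"
    and infsum_square_finite_support: "(\<Sum>\<^sub>\<infinity>i. (cmod (f i))\<^sup>2) = (\<Sum>i\<in>A. (cmod (f i))\<^sup>2)"
proof -
  have "(\<lambda>i. (cmod (f i))\<^sup>2) summable_on UNIV \<longleftrightarrow> (\<lambda>i. (cmod (f i))\<^sup>2) summable_on A"
    by (rule summable_on_cong_neutral) (use assms in auto)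
  then show "(\<lambda>i. (cmod (f i))\<^sup>2) summable_on UNIV"
    using assms(1) by simp
  have "(\<Sum>\<^sub>\<infinity>i. (cmod (f i))\<^sup>2) = (\<Sum>\<^sub>\<infinity>i\<in>A. (cmod (f i))\<^sup>2)"
    by (rule infsum_cong_neutral) (use assms in auto)
  then show "(\<Sum>\<^sub>\<infinity>i. (cmod (f i))\<^sup>2) = (\<Sum>i\<in>A. (cmod (f i))\<^sup>2)"
    using assms(1) by simp
qed

lemma norm_le_l2norm:
  fixes f :: "'a \<Rightarrow> complex"
  assumes "(\<lambda>i. (cmod (f i))\<^sup>2) summable_on UNIV"
  shows "cmod (f i) \<le> l2norm f"
proof -
  have "(\<Sum>j\<in>{i}. (cmod (f j))\<^sup>2) \<le> (\<Sum>\<^sub>\<infinity>j. (cmod (f j))\<^sup>2)"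
    by (rule finite_sum_le_infsum) (use assms in auto)
  then show ?thesis
    unfolding l2norm_def by (simp add: real_le_rsqrt)
qed

lemma square_summable_diff:
  fixes f g :: "'a \<Rightarrow> complex"
  assumes "(\<lambda>i. (cmod (f i))\<^sup>2) summable_on UNIV" and "(\<lambda>i. (cmod (g i))\<^sup>2) summable_on UNIV"
  shows "(\<lambda>i. (cmod (f i - g i))\<^sup>2) summable_on UNIV"
proof -
  have "(\<lambda>i. norm ((cmod (f i - g i))\<^sup>2)) summable_on UNIV"
  proof (rule Infinite_Sum.abs_summable_on_comparison_test')
    show "(\<lambda>i. 2 * (cmod (f i))\<^sup>2 + 2 * (cmod (g i))\<^sup>2) summable_on UNIV"
      using assms by (intro summable_on_add summable_on_cmult_right)
    fix i
    have "(cmod (f i - g i))\<^sup>2 \<le> (cmod (f i) + cmod (g i))\<^sup>2"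
      by (simp add: power_mono norm_triangle_ineq4)
    also have "\<dots> \<le> 2 * (cmod (f i))\<^sup>2 + 2 * (cmod (g i))\<^sup>2"
      using sum_squares_ge_zero[of "cmod (f i) - cmod (g i)" 0]
      by (simp add: power2_eq_square algebra_simps)
    finally show "norm ((cmod (f i - g i))\<^sup>2) \<le> 2 * (cmod (f i))\<^sup>2 + 2 * (cmod (g i))\<^sup>2"
      by simp
  qed
  then show ?thesis by simp
qed

lemma l2inner_delta_left: "l2inner (delta b) f = f b"
proof -
  have "l2inner (delta b) f = (\<Sum>\<^sub>\<infinity>i\<in>{b}. cnj (delta b i) * f i)"
    unfolding l2inner_def by (rule infsum_cong_neutral) (auto simp: delta_def)
  then show ?thesis by (simp add: delta_def)
qed

lemma l2inner_delta_right: "l2inner f (delta b) = cnj (f b)"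
proof -
  have "l2inner f (delta b) = (\<Sum>\<^sub>\<infinity>i\<in>{b}. cnj (f i) * delta b i)"
    unfolding l2inner_def by (rule infsum_cong_neutral) (auto simp: delta_def)
  then show ?thesis by (simp add: delta_def)
qed

lemma l2norm_indicator_scaled:
  assumes "finite A"
  shows "l2norm (\<lambda>\<alpha>. if \<alpha> \<in> A then a else 0) = sqrt (real (card A)) * cmod a"
  using infsum_square_finite_support[OF assms, of "\<lambda>\<alpha>. if \<alpha> \<in> A then a else 0"]
  by (simp add: l2norm_def real_sqrt_mult)

lemma square_summable_const_on_infinite_imp_zero:
  fixes z :: "'a \<Rightarrow> complex"
  assumes "(\<lambda>i. (cmod (z i))\<^sup>2) summable_on UNIV" and "infinite M"
    and "\<And>\<alpha>. \<alpha> \<in> M \<Longrightarrow> z \<alpha> = w"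
  shows "w = 0"
proof -
  have "(\<lambda>i. (cmod (z i))\<^sup>2) summable_on M"
    by (rule summable_on_subset_banach[OF assms(1)]) simp
  then have "(\<lambda>_. (cmod w)\<^sup>2) summable_on M"
    using summable_on_cong[of M "\<lambda>i. (cmod (z i))\<^sup>2" "\<lambda>_. (cmod w)\<^sup>2"] assms(3) by simp
  then show "w = 0"
    using infsum_diverge_constant[OF assms(2), of "(cmod w)\<^sup>2"] by auto
qed

lemma tendsto_coordinate_if_l2norm_tendsto:
  fixes f :: "nat \<Rightarrow> 'a \<Rightarrow> complex"
  assumes "\<And>n. (\<lambda>i. (cmod (f n i))\<^sup>2) summable_on UNIV" and "(\<lambda>i. (cmod (g i))\<^sup>2) summable_on UNIV"
    and "(\<lambda>n. l2norm (\<lambda>i. f n i - g i)) \<longlonglongrightarrow> 0"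
  shows "(\<lambda>n. f n i) \<longlonglongrightarrow> g i"
proof -
  have "(\<lambda>n. f n i - g i) \<longlonglongrightarrow> 0"
  proof (rule Lim_null_comparison[OF _ assms(3)])
    show "\<forall>\<^sub>F n in sequentially. norm (f n i - g i) \<le> l2norm (\<lambda>i. f n i - g i)"
      using norm_le_l2norm[OF square_summable_diff[OF assms(1,2)]] by simp
  qed
  then show ?thesis
    by (simp add: LIM_zero_iff)
qed

lemma norm_sum_squared_le_card_mult:
  fixes f :: "'a \<Rightarrow> complex"
  shows "(cmod (\<Sum>\<alpha>\<in>A. f \<alpha>))\<^sup>2 \<le> real (card A) * (\<Sum>\<alpha>\<in>A. (cmod (f \<alpha>))\<^sup>2)"
proof -
  have "(cmod (\<Sum>\<alpha>\<in>A. f \<alpha>))\<^sup>2 \<le> (\<Sum>\<alpha>\<in>A. cmod (f \<alpha>))\<^sup>2"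
    by (simp add: power_mono norm_sum)
  also have "\<dots> \<le> (\<Sum>\<alpha>\<in>A. (cmod (f \<alpha>))\<^sup>2) * real (card A)"
    by (rule sum_squared_le_sum_of_squares)
  finally show ?thesis by (simp add: mult.commute)
qed

lemma op_norm_le:
  assumes "(\<lambda>_. 0) \<in> D" and "0 \<le> C" and "\<And>x. x \<in> D \<Longrightarrow> l2norm (T x) \<le> C * l2norm x"
  shows "op_norm D T \<le> C"
  unfolding op_norm_def
proof (rule cSup_least)
  show "{l2norm (T x) |x. x \<in> D \<and> l2norm x \<le> 1} \<noteq> {}"
    using assms(1) by (auto simp: l2norm_def)
  fix r assume "r \<in> {l2norm (T x) |x. x \<in> D \<and> l2norm x \<le> 1}"
  then obtain x where "x \<in> D" "l2norm x \<le> 1" "r = l2norm (T x)"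
    by blast
  then show "r \<le> C"
    using assms(3) mult_left_mono[of "l2norm x" 1 C] assms(2) by fastforce
qed

locale left_regular =
  fixes \<Gamma> :: "'g set" and d c :: "'g \<Rightarrow> 's" and pr :: "'g \<Rightarrow> 'g \<Rightarrow> 'g" and \<tau> :: "'s \<Rightarrow> 'x"
begin

abbreviation H :: "'x \<Rightarrow> ('g \<Rightarrow> complex) set" where "H x \<equiv> ell2 \<Gamma> c \<tau> x"
abbreviation D :: "'g \<Rightarrow> ('g \<Rightarrow> complex) set" where "D \<gamma> \<equiv> Ldom \<Gamma> d c \<tau> \<gamma>"
abbreviation L :: "'g \<Rightarrow> ('g \<Rightarrow> complex) \<Rightarrow> 'g \<Rightarrow> complex" where "L \<gamma> \<equiv> Lop \<Gamma> d c pr \<gamma>"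
abbreviation pre :: "'g \<Rightarrow> 'g \<Rightarrow> 'g set" where "pre \<gamma> \<beta> \<equiv> mpre \<Gamma> d c pr \<gamma> \<beta>"
abbreviation adj_dom_L :: "'g \<Rightarrow> ('g \<Rightarrow> complex) set" where
  "adj_dom_L \<gamma> \<equiv> adj_dom (H (\<tau> (d \<gamma>))) (H (\<tau> (c \<gamma>))) (D \<gamma>) (L \<gamma>)"
abbreviation graph_closure_L :: "'g \<Rightarrow> (('g \<Rightarrow> complex) \<times> ('g \<Rightarrow> complex)) set" where
  "graph_closure_L \<gamma> \<equiv> graph_closure (H (\<tau> (d \<gamma>))) (H (\<tau> (c \<gamma>))) (D \<gamma>) (L \<gamma>)"

lemma mem_pre_iff: "\<alpha> \<in> pre \<gamma> \<beta> \<longleftrightarrow> \<alpha> \<in> \<Gamma> \<and> c \<alpha> = d \<gamma> \<and> pr \<gamma> \<alpha> = \<beta>"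
  unfolding mpre_def fibre_def by auto

lemma square_summable_ell2: "f \<in> H x \<Longrightarrow> (\<lambda>i. (cmod (f i))\<^sup>2) summable_on UNIV"
  by (simp add: ell2_def)

lemma delta_in_ell2: "\<alpha> \<in> \<Gamma> \<Longrightarrow> delta \<alpha> \<in> H (\<tau> (c \<alpha>))"
  using square_summable_finite_support[of "{\<alpha>}" "delta \<alpha>"] by (auto simp: ell2_def delta_def)

lemma delta_in_Ldom: "\<alpha> \<in> \<Gamma> \<Longrightarrow> \<tau> (c \<alpha>) = \<tau> (d \<gamma>) \<Longrightarrow> delta \<alpha> \<in> D \<gamma>"
  using delta_in_ell2[of \<alpha>] by (auto simp: Ldom_def delta_def)

lemma zero_in_Ldom: "(\<lambda>_. 0) \<in> D \<gamma>"
  by (simp add: Ldom_def ell2_def)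

lemma indicator_in_Ldom:
  assumes "finite A" and "A \<subseteq> pre \<gamma> \<beta>"
  shows "(\<lambda>\<alpha>. if \<alpha> \<in> A then a else 0) \<in> D \<gamma>"
  using assms square_summable_finite_support[of A "\<lambda>\<alpha>. if \<alpha> \<in> A then a else 0"]
  by (auto simp: Ldom_def ell2_def mem_pre_iff intro: finite_subset[of _ A])

lemma Lop_eq_sum_pre:
  assumes "finite (pre \<gamma> \<eta>)"
  shows "L \<gamma> f \<eta> = (\<Sum>\<alpha>\<in>pre \<gamma> \<eta>. f \<alpha>)"
  unfolding Lop_def by (rule sum.mono_neutral_left) (use assms in auto)

lemma Lop_nonzeroE:
  assumes "L \<gamma> f \<eta> \<noteq> 0"
  obtains \<alpha> where "\<alpha> \<in> pre \<gamma> \<eta>" and "f \<alpha> \<noteq> 0"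
proof -
  have "{\<alpha> \<in> pre \<gamma> \<eta>. f \<alpha> \<noteq> 0} \<noteq> {}"
  proof
    assume "{\<alpha> \<in> pre \<gamma> \<eta>. f \<alpha> \<noteq> 0} = {}"
    then have "L \<gamma> f \<eta> = 0"
      by (simp add: Lop_def)
    with assms show False ..
  qed
  then show ?thesis using that by blast
qed

lemma Lop_indicator:
  assumes "A \<subseteq> pre \<gamma> \<beta>"
  shows "L \<gamma> (\<lambda>\<alpha>. if \<alpha> \<in> A then a else 0) = (\<lambda>\<eta>. if \<eta> = \<beta> then of_nat (card A) * a else 0)"
proof (cases "a = 0")
  case False
  show ?thesis
  proof
    fix \<eta>
    have "{\<alpha> \<in> pre \<gamma> \<eta>. (if \<alpha> \<in> A then a else 0) \<noteq> 0} = (if \<eta> = \<beta> then A else {})"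
      using assms False by (auto simp: mem_pre_iff)
    then show "L \<gamma> (\<lambda>\<alpha>. if \<alpha> \<in> A then a else 0) \<eta> = (if \<eta> = \<beta> then of_nat (card A) * a else 0)"
      unfolding Lop_def by (simp cong: sum.cong)
  qed
qed (auto simp: Lop_def)

lemma Lop_delta:
  assumes "\<alpha> \<in> pre \<gamma> \<beta>"
  shows "L \<gamma> (delta \<alpha>) = delta \<beta>"
proof -
  have "delta \<alpha> = (\<lambda>x. if x \<in> {\<alpha>} then 1 else 0)"
    by (auto simp: delta_def)
  then show ?thesis
    using Lop_indicator[of "{\<alpha>}" \<gamma> \<beta> 1] assms by (auto simp: delta_def)
qed

lemma Lop_delta_eq_zero: "c \<alpha> \<noteq> d \<gamma> \<Longrightarrow> L \<gamma> (delta \<alpha>) = (\<lambda>_. 0)"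
  by (auto simp: Lop_def delta_def mem_pre_iff)

lemma square_summable_Lop:
  assumes "x \<in> D \<gamma>"
  shows "(\<lambda>i. (cmod (L \<gamma> x i))\<^sup>2) summable_on UNIV"
proof (rule square_summable_finite_support)
  show "finite (pr \<gamma> ` {\<alpha>. x \<alpha> \<noteq> 0})"
    using assms by (simp add: Ldom_def)
  show "L \<gamma> x \<eta> = 0" if "\<eta> \<notin> pr \<gamma> ` {\<alpha>. x \<alpha> \<noteq> 0}" for \<eta>
  proof (rule ccontr)
    assume "L \<gamma> x \<eta> \<noteq> 0"
    then obtain \<alpha> where "\<alpha> \<in> pre \<gamma> \<eta>" "x \<alpha> \<noteq> 0"
      by (rule Lop_nonzeroE)
    then show False
      using that by (auto simp: mem_pre_iff)
  qed
qed

subsection \<open>Adjoint and closability\<close>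

lemma delta_in_adj_dom_if_finite_pre:
  assumes "\<beta> \<in> fibre \<Gamma> c (c \<gamma>)" and fin: "finite (pre \<gamma> \<beta>)"
  shows "delta \<beta> \<in> adj_dom_L \<gamma>"
proof -
  define z where "z = (\<lambda>\<alpha>. if \<alpha> \<in> pre \<gamma> \<beta> then (1::complex) else 0)"
  have "z \<in> H (\<tau> (d \<gamma>))"
    using square_summable_finite_support[OF fin, of z] by (auto simp: z_def ell2_def mem_pre_iff)
  moreover have "delta \<beta> \<in> H (\<tau> (c \<gamma>))"
    using assms delta_in_ell2[of \<beta>] by (auto simp: fibre_def)
  moreover have "l2inner (delta \<beta>) (L \<gamma> x) = l2inner z x" for x
  proof -
    have "l2inner z x = (\<Sum>\<^sub>\<infinity>\<alpha>\<in>pre \<gamma> \<beta>. cnj (z \<alpha>) * x \<alpha>)"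
      unfolding l2inner_def by (rule infsum_cong_neutral) (auto simp: z_def)
    also have "\<dots> = (\<Sum>\<alpha>\<in>pre \<gamma> \<beta>. x \<alpha>)"
      using fin by (simp add: z_def)
    finally show ?thesis
      by (simp add: l2inner_delta_left Lop_eq_sum_pre[OF fin])
  qed
  ultimately show ?thesis
    unfolding adj_dom_def by blast
qed

text \<open>An adjoint vector \<open>z = L(\<gamma>)\<^sup>* y\<close> is constant, with value \<open>y \<beta>\<close>, on \<open>m\<^sub>\<gamma>\<^sup>-\<^sup>1({\<beta>})\<close>.\<close>
lemma adj_dom_orthogonal_delta_if_infinite_pre:
  assumes inf: "infinite (pre \<gamma> \<beta>)" and y: "y \<in> adj_dom_L \<gamma>"
  shows "l2inner y (delta \<beta>) = 0"
proof -
  obtain z where z: "z \<in> H (\<tau> (d \<gamma>))"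
    and adj: "\<And>x. x \<in> D \<gamma> \<Longrightarrow> l2inner y (L \<gamma> x) = l2inner z x"
    using y unfolding adj_dom_def by blast
  have "z \<alpha> = y \<beta>" if "\<alpha> \<in> pre \<gamma> \<beta>" for \<alpha>
  proof -
    have "delta \<alpha> \<in> D \<gamma>"
      using that by (intro delta_in_Ldom) (auto simp: mem_pre_iff)
    from adj[OF this] show ?thesis
      by (simp add: Lop_delta[OF that] l2inner_delta_right)
  qed
  then have "y \<beta> = 0"
    by (rule square_summable_const_on_infinite_imp_zero[OF square_summable_ell2[OF z] inf])
  then show ?thesis
    by (simp add: l2inner_delta_right)
qed

lemma graph_closure_apply:
  assumes fin: "finite (pre \<gamma> \<eta>)" and xy: "(x, y) \<in> graph_closure_L \<gamma>"
  shows "y \<eta> = (\<Sum>\<alpha>\<in>pre \<gamma> \<eta>. x \<alpha>)"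
proof -
  obtain xs where xs: "\<And>n. xs n \<in> D \<gamma>"
    and x: "x \<in> H (\<tau> (d \<gamma>))" and y: "y \<in> H (\<tau> (c \<gamma>))"
    and lim_x: "(\<lambda>n. l2norm (\<lambda>i. xs n i - x i)) \<longlonglongrightarrow> 0"
    and lim_y: "(\<lambda>n. l2norm (\<lambda>i. L \<gamma> (xs n) i - y i)) \<longlonglongrightarrow> 0"
    using xy unfolding graph_closure_def by blast
  have "(\<lambda>n. xs n \<alpha>) \<longlonglongrightarrow> x \<alpha>" for \<alpha>
    using xs by (intro tendsto_coordinate_if_l2norm_tendsto[OF _ square_summable_ell2[OF x] lim_x])
      (auto simp: Ldom_def ell2_def)
  then have "(\<lambda>n. L \<gamma> (xs n) \<eta>) \<longlonglongrightarrow> (\<Sum>\<alpha>\<in>pre \<gamma> \<eta>. x \<alpha>)"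
    unfolding Lop_eq_sum_pre[OF fin] by (intro tendsto_sum)
  moreover have "(\<lambda>n. L \<gamma> (xs n) \<eta>) \<longlonglongrightarrow> y \<eta>"
    by (rule tendsto_coordinate_if_l2norm_tendsto[OF square_summable_Lop[OF xs]
          square_summable_ell2[OF y] lim_y])
  ultimately show ?thesis
    using LIMSEQ_unique by blast
qed

lemma closable_if_finite_pre:
  assumes "\<And>\<eta>. finite (pre \<gamma> \<eta>)"
  shows "closable_op (H (\<tau> (d \<gamma>))) (H (\<tau> (c \<gamma>))) (D \<gamma>) (L \<gamma>)"
  unfolding closable_op_def using graph_closure_apply[OF assms] by (metis ext)

lemma zero_zero_in_graph_closure: "((\<lambda>_. 0), (\<lambda>_. 0)) \<in> graph_closure_L \<gamma>"
  unfolding graph_closure_def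
  by (auto simp: ell2_def l2norm_def Lop_def zero_in_Ldom intro!: exI[of _ "\<lambda>_ _. 0"])

text \<open>The vectors \<open>x\<^sub>n = (n+1)\<^sup>-\<^sup>1 \<cdot> 1\<^bsub>A\<^sub>n\<^esub>\<close>, with \<open>A\<^sub>n \<subseteq> m\<^sub>\<gamma>\<^sup>-\<^sup>1({\<beta>})\<close> of size \<open>n+1\<close>,
  have norm \<open>(n+1)\<^sup>-\<^sup>1\<^sup>/\<^sup>2 \<rightarrow> 0\<close> but are all mapped to \<open>\<delta>\<^sub>\<beta>\<close>.\<close>
lemma zero_delta_in_graph_closure_if_infinite_pre:
  assumes \<beta>: "\<beta> \<in> fibre \<Gamma> c (c \<gamma>)" and inf: "infinite (pre \<gamma> \<beta>)"
  shows "((\<lambda>_. 0), delta \<beta>) \<in> graph_closure_L \<gamma>"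
proof -
  obtain a :: "nat \<Rightarrow> 'g" where a: "inj a" "range a \<subseteq> pre \<gamma> \<beta>"
    using infinite_countable_subset[OF inf] by blast
  define A where "A n = a ` {..n}" for n
  have A: "finite (A n)" "A n \<subseteq> pre \<gamma> \<beta>" "card (A n) = Suc n" for n
    using a by (auto simp: A_def card_image inj_on_subset)
  define xs where "xs n = (\<lambda>\<alpha>. if \<alpha> \<in> A n then complex_of_real (1 / real (Suc n)) else 0)" for n
  have "xs n \<in> D \<gamma>" for n
    unfolding xs_def by (rule indicator_in_Ldom[OF A(1,2)])
  moreover have "L \<gamma> (xs n) = delta \<beta>" for n
  proof -
    have "of_nat (Suc n) * complex_of_real (1 / real (Suc n)) = 1"
      by (simp add: of_real_divide field_simps del: of_nat_Suc)
    then show ?thesis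
      unfolding xs_def Lop_indicator[OF A(2)] A(3) delta_def by (rule arg_cong)
  qed
  moreover have "(\<lambda>n. l2norm (\<lambda>i. xs n i - 0)) \<longlonglongrightarrow> 0"
  proof -
    have "l2norm (\<lambda>i. xs n i - 0) = sqrt (real (Suc n)) * (1 / real (Suc n))" for n
      using l2norm_indicator_scaled[OF A(1), of n "complex_of_real (1 / real (Suc n))"]
      by (simp add: xs_def A(3) norm_divide del: of_nat_Suc)
    moreover have "(\<lambda>n. sqrt (real (Suc n)) * (1 / real (Suc n))) \<longlonglongrightarrow> 0"
      by real_asymp
    ultimately show ?thesis
      by simp
  qed
  moreover have "delta \<beta> \<in> H (\<tau> (c \<gamma>))"
    using \<beta> delta_in_ell2[of \<beta>] by (auto simp: fibre_def)
  ultimately show ?thesis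
    unfolding graph_closure_def by (auto simp: ell2_def l2norm_def intro!: exI[of _ xs])
qed

lemma not_closable_if_infinite_pre:
  assumes "\<beta> \<in> fibre \<Gamma> c (c \<gamma>)" and "infinite (pre \<gamma> \<beta>)"
  shows "\<not> closable_op (H (\<tau> (d \<gamma>))) (H (\<tau> (c \<gamma>))) (D \<gamma>) (L \<gamma>)"
proof
  assume "closable_op (H (\<tau> (d \<gamma>))) (H (\<tau> (c \<gamma>))) (D \<gamma>) (L \<gamma>)"
  then have "delta \<beta> = (\<lambda>_. 0)"
    using zero_delta_in_graph_closure_if_infinite_pre[OF assms] zero_zero_in_graph_closure
    unfolding closable_op_def by blast
  then show False
    by (metis delta_def zero_neq_one)
qed

subsection \<open>Boundedness\<close>

lemma l2norm_Lop_le: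
  assumes N: "\<And>\<eta>. finite (pre \<gamma> \<eta>) \<and> card (pre \<gamma> \<eta>) \<le> N" and x: "x \<in> D \<gamma>"
  shows "l2norm (L \<gamma> x) \<le> sqrt (real N) * l2norm x"
proof -
  define F where "F = {\<alpha>. x \<alpha> \<noteq> 0}"
  define G where "G = {\<alpha> \<in> F. \<alpha> \<in> \<Gamma> \<and> c \<alpha> = d \<gamma>}"
  define T where "T = pr \<gamma> ` G"
  define P where "P \<eta> = {\<alpha> \<in> G. pr \<gamma> \<alpha> = \<eta>}" for \<eta>
  have fin: "finite F" "finite G" "finite T"
    using x by (auto simp: Ldom_def F_def G_def T_def)
  have L_eq: "L \<gamma> x \<eta> = (\<Sum>\<alpha>\<in>P \<eta>. x \<alpha>)" for \<eta>
  proof -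
    have "{\<alpha> \<in> pre \<gamma> \<eta>. x \<alpha> \<noteq> 0} = P \<eta>"
      by (auto simp: P_def G_def F_def mem_pre_iff)
    then show ?thesis by (simp add: Lop_def)
  qed
  have "(\<Sum>\<^sub>\<infinity>\<eta>. (cmod (L \<gamma> x \<eta>))\<^sup>2) = (\<Sum>\<eta>\<in>T. (cmod (L \<gamma> x \<eta>))\<^sup>2)"
  proof (rule infsum_square_finite_support[OF fin(3)])
    show "L \<gamma> x \<eta> = 0" if "\<eta> \<notin> T" for \<eta>
    proof -
      have "P \<eta> = {}"
        using that by (auto simp: P_def T_def)
      then show ?thesis by (simp add: L_eq)
    qed
  qed
  also have "\<dots> \<le> (\<Sum>\<eta>\<in>T. real N * (\<Sum>\<alpha>\<in>P \<eta>. (cmod (x \<alpha>))\<^sup>2))"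
  proof (rule sum_mono)
    fix \<eta>
    have "card (P \<eta>) \<le> N"
      using N[of \<eta>] card_mono[of "pre \<gamma> \<eta>" "P \<eta>"] by (force simp: P_def G_def mem_pre_iff)
    then show "(cmod (L \<gamma> x \<eta>))\<^sup>2 \<le> real N * (\<Sum>\<alpha>\<in>P \<eta>. (cmod (x \<alpha>))\<^sup>2)"
      using norm_sum_squared_le_card_mult[of x "P \<eta>"]
        mult_right_mono[of "real (card (P \<eta>))" "real N" "\<Sum>\<alpha>\<in>P \<eta>. (cmod (x \<alpha>))\<^sup>2"]
      by (simp add: L_eq sum_nonneg)
  qed
  also have "\<dots> = real N * (\<Sum>\<alpha>\<in>G. (cmod (x \<alpha>))\<^sup>2)"
    unfolding sum_distrib_left[symmetric] P_def T_def
    by (simp add: sum.group[OF fin(2) finite_imageI[OF fin(2)]])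
  also have "\<dots> \<le> real N * (\<Sum>\<alpha>\<in>F. (cmod (x \<alpha>))\<^sup>2)"
    by (intro mult_left_mono sum_mono2 fin) (auto simp: G_def)
  also have "\<dots> = real N * (\<Sum>\<^sub>\<infinity>\<alpha>. (cmod (x \<alpha>))\<^sup>2)"
    using infsum_square_finite_support[OF fin(1), of x] by (simp add: F_def)
  finally show ?thesis
    unfolding l2norm_def by (simp add: real_sqrt_mult[symmetric])
qed

lemma card_le_square_if_bounded:
  assumes C: "\<And>x. x \<in> D \<gamma> \<Longrightarrow> l2norm (L \<gamma> x) \<le> C * l2norm x"
    and A: "finite A" "A \<subseteq> pre \<gamma> \<beta>"
  shows "real (card A) \<le> C\<^sup>2"
proof (cases "A = {}")
  case False
  let ?x = "\<lambda>\<alpha>. if \<alpha> \<in> A then (1::complex) else 0"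
  have "L \<gamma> ?x = (\<lambda>\<eta>. if \<eta> \<in> {\<beta>} then of_nat (card A) else 0)"
    unfolding Lop_indicator[OF A(2)] by auto
  then have "l2norm (L \<gamma> ?x) = real (card A)"
    using l2norm_indicator_scaled[of "{\<beta>}" "of_nat (card A)"] by simp
  moreover have "l2norm ?x = sqrt (real (card A))"
    using l2norm_indicator_scaled[OF A(1), of 1] by simp
  moreover have "l2norm (L \<gamma> ?x) \<le> C * l2norm ?x"
    by (rule C[OF indicator_in_Ldom[OF A]])
  ultimately have "sqrt (real (card A)) * sqrt (real (card A)) \<le> C * sqrt (real (card A))"
    by simp
  moreover have "0 < sqrt (real (card A))"
    using False A(1) by (simp add: card_gt_0_iff)
  ultimately have "sqrt (real (card A)) \<le> C"
    by (meson mult_right_le_imp_le)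
  then have "(sqrt (real (card A)))\<^sup>2 \<le> C\<^sup>2"
    by (intro power_mono) simp_all
  then show ?thesis
    by simp
qed simp

lemma finite_pre_card_le_if_bounded:
  assumes "bounded_op (D \<gamma>) (L \<gamma>)"
  shows "\<exists>N::nat. \<forall>\<beta>. finite (pre \<gamma> \<beta>) \<and> card (pre \<gamma> \<beta>) \<le> N"
proof -
  obtain C where C: "\<And>x. x \<in> D \<gamma> \<Longrightarrow> l2norm (L \<gamma> x) \<le> C * l2norm x"
    using assms unfolding bounded_op_def by blast
  define N where "N = nat \<lceil>C\<^sup>2\<rceil>"
  have card_le: "card A \<le> N" if "finite A" "A \<subseteq> pre \<gamma> \<beta>" for A \<beta>
    using card_le_square_if_bounded[OF C that] real_nat_ceiling_ge[of "C\<^sup>2"]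
    unfolding N_def by linarith
  have "finite (pre \<gamma> \<beta>)" for \<beta>
  proof (rule ccontr)
    assume "infinite (pre \<gamma> \<beta>)"
    then obtain A where "finite A" "card A = Suc N" "A \<subseteq> pre \<gamma> \<beta>"
      using infinite_arbitrarily_large by blast
    then show False
      using card_le by fastforce
  qed
  then show ?thesis
    using card_le by blast
qed

subsection \<open>Injective multiplication maps\<close>

lemma finite_pre_if_inj_on:
  assumes "inj_on (pr \<gamma>) (fibre \<Gamma> c (d \<gamma>))"
  shows "finite (pre \<gamma> \<eta>)"
proof (rule inj_on_finite)
  show "inj_on (pr \<gamma>) (pre \<gamma> \<eta>)"
    using assms by (rule inj_on_subset) (auto simp: mpre_def)
  show "pr \<gamma> ` pre \<gamma> \<eta> \<subseteq> {\<eta>}"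
    by (auto simp: mem_pre_iff)
qed simp

lemma Lop_apply_product:
  assumes inj: "inj_on (pr \<gamma>) (fibre \<Gamma> c (d \<gamma>))" and \<alpha>: "\<alpha> \<in> fibre \<Gamma> c (d \<gamma>)"
  shows "L \<gamma> f (pr \<gamma> \<alpha>) = f \<alpha>"
proof -
  have "pre \<gamma> (pr \<gamma> \<alpha>) = {\<alpha>}"
    using inj \<alpha> by (auto simp: mpre_def inj_on_eq_iff)
  then show ?thesis
    by (simp add: Lop_eq_sum_pre)
qed

lemma Lop_eq_zero_outside_image:
  assumes "\<eta> \<notin> pr \<gamma> ` fibre \<Gamma> c (d \<gamma>)"
  shows "L \<gamma> f \<eta> = 0"
proof -
  have "pre \<gamma> \<eta> = {}"
    using assms by (auto simp: mpre_def)
  then show ?thesis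
    by (simp add: Lop_def)
qed

lemma Lop_linear:
  assumes "\<And>\<eta>. finite (pre \<gamma> \<eta>)"
  shows "L \<gamma> (\<lambda>i. a * f i + g i) = (\<lambda>\<eta>. a * L \<gamma> f \<eta> + L \<gamma> g \<eta>)"
  by (rule ext) (simp add: Lop_eq_sum_pre[OF assms] sum.distrib sum_distrib_left)

lemma
  assumes inj: "inj_on (pr \<gamma>) (fibre \<Gamma> c (d \<gamma>))"
    and f: "(\<lambda>i. (cmod (f i))\<^sup>2) summable_on UNIV"
  shows square_summable_Lop_if_inj_on: "(\<lambda>\<eta>. (cmod (L \<gamma> f \<eta>))\<^sup>2) summable_on UNIV"
    and infsum_square_Lop_if_inj_on:
      "(\<Sum>\<^sub>\<infinity>\<eta>. (cmod (L \<gamma> f \<eta>))\<^sup>2) = (\<Sum>\<^sub>\<infinity>\<alpha>\<in>fibre \<Gamma> c (d \<gamma>). (cmod (f \<alpha>))\<^sup>2)"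
proof -
  let ?A = "fibre \<Gamma> c (d \<gamma>)"
  let ?q = "\<lambda>\<eta>. (cmod (L \<gamma> f \<eta>))\<^sup>2" and ?p = "\<lambda>\<alpha>. (cmod (f \<alpha>))\<^sup>2"
  have q_p: "(?q \<circ> pr \<gamma>) \<alpha> = ?p \<alpha>" if "\<alpha> \<in> ?A" for \<alpha>
    using Lop_apply_product[OF inj that] by simp
  have q_zero: "?q \<eta> = 0" if "\<eta> \<in> UNIV - pr \<gamma> ` ?A" for \<eta>
    using Lop_eq_zero_outside_image that by simp
  have "(?q has_sum (\<Sum>\<^sub>\<infinity>\<alpha>\<in>?A. ?p \<alpha>)) (pr \<gamma> ` ?A)"
  proof -
    have "(?p has_sum (\<Sum>\<^sub>\<infinity>\<alpha>\<in>?A. ?p \<alpha>)) ?A"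
      using summable_on_subset_banach[OF f] by (simp add: has_sum_infsum)
    then have "((?q \<circ> pr \<gamma>) has_sum (\<Sum>\<^sub>\<infinity>\<alpha>\<in>?A. ?p \<alpha>)) ?A"
      by (rule has_sum_cong[THEN iffD1, rotated]) (use q_p in simp)
    then show ?thesis
      by (simp add: has_sum_reindex[OF inj])
  qed
  moreover have "(?q has_sum s) UNIV \<longleftrightarrow> (?q has_sum s) (pr \<gamma> ` ?A)" for s
    by (rule has_sum_cong_neutral) (use q_zero in auto)
  ultimately have "(?q has_sum (\<Sum>\<^sub>\<infinity>\<alpha>\<in>?A. ?p \<alpha>)) UNIV"
    by blast
  then show "?q summable_on UNIV" and "(\<Sum>\<^sub>\<infinity>\<eta>. ?q \<eta>) = (\<Sum>\<^sub>\<infinity>\<alpha>\<in>?A. ?p \<alpha>)"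
    by (auto simp: summable_on_def infsumI)
qed

end

locale semigroupoid_left_regular = left_regular \<Gamma> d c pr \<tau>
  for \<Gamma> :: "'g set" and d c :: "'g \<Rightarrow> 's" and pr :: "'g \<Rightarrow> 'g \<Rightarrow> 'g" and \<tau> :: "'s \<Rightarrow> 'x" +
  fixes S :: "'s set"
  assumes semigroupoid: "semigroupoid \<Gamma> S d c pr"
begin

lemma product_closed:
  assumes "\<gamma> \<in> \<Gamma>" "\<alpha> \<in> \<Gamma>" "c \<alpha> = d \<gamma>"
  shows "pr \<gamma> \<alpha> \<in> \<Gamma>" "c (pr \<gamma> \<alpha>) = c \<gamma>" "d (pr \<gamma> \<alpha>) = d \<alpha>"
  using semigroupoid assms unfolding semigroupoid_def by auto

lemma product_assoc:
  assumes "\<alpha> \<in> \<Gamma>" "\<beta> \<in> \<Gamma>" "\<gamma> \<in> \<Gamma>" "d \<alpha> = c \<beta>" "d \<beta> = c \<gamma>"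
  shows "pr (pr \<alpha> \<beta>) \<gamma> = pr \<alpha> (pr \<beta> \<gamma>)"
  using semigroupoid assms unfolding semigroupoid_def by blast

lemma pre_eq_empty_outside_fibre:
  assumes "\<gamma> \<in> \<Gamma>" "\<beta> \<notin> fibre \<Gamma> c (c \<gamma>)"
  shows "pre \<gamma> \<beta> = {}"
  using assms product_closed[OF assms(1)] by (auto simp: mem_pre_iff fibre_def)

lemma closable_iff_finite_pre:
  assumes "\<gamma> \<in> \<Gamma>"
  shows "closable_op (H (\<tau> (d \<gamma>))) (H (\<tau> (c \<gamma>))) (D \<gamma>) (L \<gamma>)
    \<longleftrightarrow> (\<forall>\<beta> \<in> fibre \<Gamma> c (c \<gamma>). finite (pre \<gamma> \<beta>))"
  using closable_if_finite_pre[of \<gamma>] not_closable_if_infinite_pre[of _ \<gamma>]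
    pre_eq_empty_outside_fibre[OF assms] by (metis finite.emptyI)

lemma finite_card_pre_le_everywhere:
  assumes "\<gamma> \<in> \<Gamma>" and "\<forall>\<beta> \<in> fibre \<Gamma> c (c \<gamma>). finite (pre \<gamma> \<beta>) \<and> card (pre \<gamma> \<beta>) \<le> N"
  shows "finite (pre \<gamma> \<eta>) \<and> card (pre \<gamma> \<eta>) \<le> N"
  using assms pre_eq_empty_outside_fibre[OF assms(1), of \<eta>] by (cases "\<eta> \<in> fibre \<Gamma> c (c \<gamma>)") auto

lemma bounded_iff_card_pre_bounded:
  assumes "\<gamma> \<in> \<Gamma>"
  shows "bounded_op (D \<gamma>) (L \<gamma>)
    \<longleftrightarrow> (\<exists>N::nat. \<forall>\<beta> \<in> fibre \<Gamma> c (c \<gamma>). finite (pre \<gamma> \<beta>) \<and> card (pre \<gamma> \<beta>) \<le> N)"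
  using finite_pre_card_le_if_bounded[of \<gamma>]
    l2norm_Lop_le[OF finite_card_pre_le_everywhere[OF assms]]
  unfolding bounded_op_def by blast

lemma op_norm_Lop_le:
  assumes "\<gamma> \<in> \<Gamma>" and "\<forall>\<beta> \<in> fibre \<Gamma> c (c \<gamma>). finite (pre \<gamma> \<beta>) \<and> card (pre \<gamma> \<beta>) \<le> N"
  shows "op_norm (D \<gamma>) (L \<gamma>) \<le> real N"
proof -
  have "op_norm (D \<gamma>) (L \<gamma>) \<le> sqrt (real N)"
    using l2norm_Lop_le[OF finite_card_pre_le_everywhere[OF assms]]
    by (intro op_norm_le zero_in_Ldom) simp_all
  also have "\<dots> \<le> real N"
  proof -
    have "real N \<le> (real N)\<^sup>2"
      by (cases N) (simp_all add: power2_eq_square)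
    then have "sqrt (real N) \<le> sqrt ((real N)\<^sup>2)"
      by (rule real_sqrt_le_mono)
    then show ?thesis
      by simp
  qed
  finally show ?thesis .
qed

lemma Lop_in_ell2_if_inj_on:
  assumes \<gamma>: "\<gamma> \<in> \<Gamma>" and inj: "inj_on (pr \<gamma>) (fibre \<Gamma> c (d \<gamma>))" and f: "f \<in> H (\<tau> (d \<gamma>))"
  shows "L \<gamma> f \<in> H (\<tau> (c \<gamma>))"
proof -
  have "\<eta> \<in> \<Gamma> \<and> \<tau> (c \<eta>) = \<tau> (c \<gamma>)" if "L \<gamma> f \<eta> \<noteq> 0" for \<eta>
  proof -
    have "\<eta> \<in> pr \<gamma> ` fibre \<Gamma> c (d \<gamma>)"
      using that Lop_eq_zero_outside_image[of \<eta> \<gamma> f] by blast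
    then obtain \<alpha> where "\<alpha> \<in> fibre \<Gamma> c (d \<gamma>)" "\<eta> = pr \<gamma> \<alpha>"
      by blast
    then show ?thesis
      using product_closed[OF \<gamma>] by (auto simp: fibre_def)
  qed
  then show ?thesis
    using square_summable_Lop_if_inj_on[OF inj square_summable_ell2[OF f]] by (auto simp: ell2_def)
qed

lemma Lop_bounded_linear_on:
  assumes \<gamma>: "\<gamma> \<in> \<Gamma>" and inj: "inj_on (pr \<gamma>) (fibre \<Gamma> c (d \<gamma>))"
  shows "bounded_linear_on (H (\<tau> (d \<gamma>))) (H (\<tau> (c \<gamma>))) (L \<gamma>)"
  unfolding bounded_linear_on_def
proof (intro conjI ballI allI exI[of _ 1] Lop_in_ell2_if_inj_on[OF \<gamma> inj])
  fix f assume f: "f \<in> H (\<tau> (d \<gamma>))"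
  have "(\<Sum>\<^sub>\<infinity>\<alpha>\<in>fibre \<Gamma> c (d \<gamma>). (cmod (f \<alpha>))\<^sup>2) \<le> (\<Sum>\<^sub>\<infinity>\<alpha>. (cmod (f \<alpha>))\<^sup>2)"
    using square_summable_ell2[OF f] summable_on_subset_banach[OF square_summable_ell2[OF f]]
    by (intro infsum_mono_neutral) auto
  then show "l2norm (L \<gamma> f) \<le> 1 * l2norm f"
    unfolding l2norm_def infsum_square_Lop_if_inj_on[OF inj square_summable_ell2[OF f]] by simp
qed (simp_all add: Lop_linear[OF finite_pre_if_inj_on[OF inj]])

lemma Lop_partial_isometry:
  assumes \<gamma>: "\<gamma> \<in> \<Gamma>" and inj: "inj_on (pr \<gamma>) (fibre \<Gamma> c (d \<gamma>))"
  shows "partial_isometry (H (\<tau> (d \<gamma>))) (H (\<tau> (c \<gamma>))) (L \<gamma>)"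
  unfolding partial_isometry_def
proof (intro conjI Lop_bounded_linear_on[OF \<gamma> inj] ballI impI)
  fix f assume f: "f \<in> H (\<tau> (d \<gamma>))"
    and ker: "\<forall>k \<in> H (\<tau> (d \<gamma>)). L \<gamma> k = (\<lambda>_. 0) \<longrightarrow> l2inner k f = 0"
  have "f \<alpha> = 0" if "\<alpha> \<notin> fibre \<Gamma> c (d \<gamma>)" for \<alpha>
  proof (rule ccontr)
    assume "f \<alpha> \<noteq> 0"
    then have "\<alpha> \<in> \<Gamma>" "\<tau> (c \<alpha>) = \<tau> (d \<gamma>)"
      using f by (auto simp: ell2_def)
    moreover have "c \<alpha> \<noteq> d \<gamma>"
      using that \<open>\<alpha> \<in> \<Gamma>\<close> by (auto simp: fibre_def)
    ultimately have "l2inner (delta \<alpha>) f = 0"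
      using ker delta_in_ell2[of \<alpha>] Lop_delta_eq_zero by auto
    with \<open>f \<alpha> \<noteq> 0\<close> show False
      by (simp add: l2inner_delta_left)
  qed
  then have "(\<Sum>\<^sub>\<infinity>\<alpha>\<in>fibre \<Gamma> c (d \<gamma>). (cmod (f \<alpha>))\<^sup>2) = (\<Sum>\<^sub>\<infinity>\<alpha>. (cmod (f \<alpha>))\<^sup>2)"
    by (intro infsum_cong_neutral) auto
  then show "l2norm (L \<gamma> f) = l2norm f"
    unfolding l2norm_def infsum_square_Lop_if_inj_on[OF inj square_summable_ell2[OF f]] by simp
qed

lemma pre_product:
  assumes \<alpha>: "\<alpha> \<in> \<Gamma>" and \<beta>: "\<beta> \<in> \<Gamma>" and \<alpha>\<beta>: "d \<alpha> = c \<beta>"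
  shows "pre (pr \<alpha> \<beta>) \<eta> = (\<Union>\<delta> \<in> pre \<alpha> \<eta>. pre \<beta> \<delta>)"
proof (intro equalityI subsetI)
  fix \<epsilon> assume "\<epsilon> \<in> pre (pr \<alpha> \<beta>) \<eta>"
  then have \<epsilon>: "\<epsilon> \<in> \<Gamma>" "c \<epsilon> = d \<beta>" "pr (pr \<alpha> \<beta>) \<epsilon> = \<eta>"
    using product_closed[OF \<alpha> \<beta>] \<alpha>\<beta> by (auto simp: mem_pre_iff)
  then have "pr \<beta> \<epsilon> \<in> pre \<alpha> \<eta>"
    using product_closed[OF \<beta> \<epsilon>(1)] product_assoc[OF \<alpha> \<beta> \<epsilon>(1) \<alpha>\<beta>] \<alpha>\<beta> by (auto simp: mem_pre_iff)
  moreover have "\<epsilon> \<in> pre \<beta> (pr \<beta> \<epsilon>)"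
    using \<epsilon> by (auto simp: mem_pre_iff)
  ultimately show "\<epsilon> \<in> (\<Union>\<delta> \<in> pre \<alpha> \<eta>. pre \<beta> \<delta>)"
    by blast
next
  fix \<epsilon> assume "\<epsilon> \<in> (\<Union>\<delta> \<in> pre \<alpha> \<eta>. pre \<beta> \<delta>)"
  then show "\<epsilon> \<in> pre (pr \<alpha> \<beta>) \<eta>"
    using product_assoc[OF \<alpha> \<beta>, of \<epsilon>] product_closed[OF \<alpha> \<beta>] \<alpha>\<beta> by (auto simp: mem_pre_iff)
qed

lemma Lop_product:
  assumes \<alpha>: "\<alpha> \<in> \<Gamma>" and \<beta>: "\<beta> \<in> \<Gamma>" and \<alpha>\<beta>: "d \<alpha> = c \<beta>"
    and fin_\<alpha>: "\<And>\<eta>. finite (pre \<alpha> \<eta>)" and fin_\<beta>: "\<And>\<eta>. finite (pre \<beta> \<eta>)"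
  shows "L (pr \<alpha> \<beta>) f = L \<alpha> (L \<beta> f)"
proof
  fix \<eta>
  have "L \<alpha> (L \<beta> f) \<eta> = (\<Sum>\<delta> \<in> pre \<alpha> \<eta>. \<Sum>\<epsilon> \<in> pre \<beta> \<delta>. f \<epsilon>)"
    by (simp add: Lop_eq_sum_pre fin_\<alpha> fin_\<beta>)
  also have "\<dots> = (\<Sum>\<epsilon> \<in> (\<Union>\<delta> \<in> pre \<alpha> \<eta>. pre \<beta> \<delta>). f \<epsilon>)"
    by (rule sum.UNION_disjoint[symmetric]) (auto simp: fin_\<alpha> fin_\<beta> mem_pre_iff)
  also have "\<dots> = L (pr \<alpha> \<beta>) f \<eta>"
    using fin_\<alpha> fin_\<beta> by (simp add: pre_product[OF \<alpha> \<beta> \<alpha>\<beta>] Lop_eq_sum_pre)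
  finally show "L (pr \<alpha> \<beta>) f \<eta> = L \<alpha> (L \<beta> f) \<eta>" ..
qed

lemma l2inner_Lop_eq_zero_if_codomains_differ:
  assumes \<alpha>: "\<alpha> \<in> \<Gamma>" and \<beta>: "\<beta> \<in> \<Gamma>" and "c \<alpha> \<noteq> c \<beta>"
  shows "l2inner (L \<alpha> f) (L \<beta> g) = 0"
proof -
  have "L \<alpha> f \<eta> = 0 \<or> L \<beta> g \<eta> = 0" for \<eta>
  proof (rule ccontr)
    assume "\<not> ?thesis"
    then have "\<eta> \<in> pr \<alpha> ` fibre \<Gamma> c (d \<alpha>)" "\<eta> \<in> pr \<beta> ` fibre \<Gamma> c (d \<beta>)"
      using Lop_eq_zero_outside_image[of \<eta> \<alpha> f] Lop_eq_zero_outside_image[of \<eta> \<beta> g] by blast+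
    then have "c \<eta> = c \<alpha>" "c \<eta> = c \<beta>"
      using product_closed[OF \<alpha>] product_closed[OF \<beta>] by (auto simp: fibre_def)
    with \<open>c \<alpha> \<noteq> c \<beta>\<close> show False
      by simp
  qed
  then have "(\<lambda>\<eta>. cnj (L \<alpha> f \<eta>) * L \<beta> g \<eta>) = (\<lambda>_. 0)"
    by fastforce
  then show ?thesis
    unfolding l2inner_def by simp
qed

lemma orthogonal_rep_if_left_cancellative:
  assumes inj: "\<And>\<gamma>. \<gamma> \<in> \<Gamma> \<Longrightarrow> inj_on (pr \<gamma>) (fibre \<Gamma> c (d \<gamma>))"
  shows "is_orthogonal_rep \<Gamma> d c pr H \<tau> L"
  unfolding is_orthogonal_rep_def is_representation_def
proof (intro conjI ballI impI allI)
  fix \<alpha> assume "\<alpha> \<in> \<Gamma>"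
  then show "bounded_linear_on (H (\<tau> (d \<alpha>))) (H (\<tau> (c \<alpha>))) (L \<alpha>)"
    using Lop_bounded_linear_on inj by blast
next
  fix \<alpha> \<beta> f assume "\<alpha> \<in> \<Gamma>" "\<beta> \<in> \<Gamma>" "d \<alpha> = c \<beta>"
  then show "L (pr \<alpha> \<beta>) f = L \<alpha> (L \<beta> f)"
    using Lop_product finite_pre_if_inj_on inj by blast
next
  fix \<alpha> \<beta> f g assume "\<alpha> \<in> \<Gamma>" "\<beta> \<in> \<Gamma>" "\<tau> (c \<alpha>) = \<tau> (c \<beta>) \<and> c \<alpha> \<noteq> c \<beta>"
  then show "l2inner (L \<alpha> f) (L \<beta> g) = 0"
    using l2inner_Lop_eq_zero_if_codomains_differ by blast
qed

end

theorem mainTheorem13: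
  fixes \<Gamma> :: "'g set" and S :: "'s set" and d c :: "'g \<Rightarrow> 's"
    and pr :: "'g \<Rightarrow> 'g \<Rightarrow> 'g" and X :: "'x set" and \<tau> :: "'s \<Rightarrow> 'x"
  assumes sg: "semigroupoid \<Gamma> S d c pr"
    and tau: "\<tau> ` S \<subseteq> X"
  shows
   \<comment> \<open>(i)\<close>
   "(\<forall>\<gamma> \<in> \<Gamma>. \<forall>\<beta> \<in> fibre \<Gamma> c (c \<gamma>).
       (finite (mpre \<Gamma> d c pr \<gamma> \<beta>) \<longrightarrow>
          delta \<beta> \<in> adj_dom (ell2 \<Gamma> c \<tau> (\<tau> (d \<gamma>))) (ell2 \<Gamma> c \<tau> (\<tau> (c \<gamma>)))
                            (Ldom \<Gamma> d c \<tau> \<gamma>) (Lop \<Gamma> d c pr \<gamma>)) \<and>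
       (infinite (mpre \<Gamma> d c pr \<gamma> \<beta>) \<longrightarrow>
          (\<forall>y \<in> adj_dom (ell2 \<Gamma> c \<tau> (\<tau> (d \<gamma>))) (ell2 \<Gamma> c \<tau> (\<tau> (c \<gamma>)))
                        (Ldom \<Gamma> d c \<tau> \<gamma>) (Lop \<Gamma> d c pr \<gamma>). l2inner y (delta \<beta>) = 0))) \<and>
    (\<forall>\<gamma> \<in> \<Gamma>.
       closable_op (ell2 \<Gamma> c \<tau> (\<tau> (d \<gamma>))) (ell2 \<Gamma> c \<tau> (\<tau> (c \<gamma>)))
                   (Ldom \<Gamma> d c \<tau> \<gamma>) (Lop \<Gamma> d c pr \<gamma>)
       \<longleftrightarrow> (\<forall>\<beta> \<in> fibre \<Gamma> c (c \<gamma>). finite (mpre \<Gamma> d c pr \<gamma> \<beta>))) \<and>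
   \<comment> \<open>(ii)\<close>
    (\<forall>\<gamma> \<in> \<Gamma>.
       (bounded_op (Ldom \<Gamma> d c \<tau> \<gamma>) (Lop \<Gamma> d c pr \<gamma>) \<longleftrightarrow>
          (\<exists>N::nat. \<forall>\<beta> \<in> fibre \<Gamma> c (c \<gamma>).
              finite (mpre \<Gamma> d c pr \<gamma> \<beta>) \<and> card (mpre \<Gamma> d c pr \<gamma> \<beta>) \<le> N)) \<and>
       (\<forall>N::nat. (\<forall>\<beta> \<in> fibre \<Gamma> c (c \<gamma>).
              finite (mpre \<Gamma> d c pr \<gamma> \<beta>) \<and> card (mpre \<Gamma> d c pr \<gamma> \<beta>) \<le> N) \<longrightarrow>
          op_norm (Ldom \<Gamma> d c \<tau> \<gamma>) (Lop \<Gamma> d c pr \<gamma>) \<le> real N)) \<and>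
   \<comment> \<open>(iii)\<close>
    ((\<forall>\<gamma> \<in> \<Gamma>. \<forall>\<beta> \<in> fibre \<Gamma> c (d \<gamma>). \<forall>\<beta>' \<in> fibre \<Gamma> c (d \<gamma>).
        \<beta> \<noteq> \<beta>' \<longrightarrow> pr \<gamma> \<beta> \<noteq> pr \<gamma> \<beta>') \<longrightarrow>
      (\<exists>V. (\<forall>\<gamma> \<in> \<Gamma>. (\<forall>f \<in> Ldom \<Gamma> d c \<tau> \<gamma>. V \<gamma> f = Lop \<Gamma> d c pr \<gamma> f) \<and>
                     partial_isometry (ell2 \<Gamma> c \<tau> (\<tau> (d \<gamma>))) (ell2 \<Gamma> c \<tau> (\<tau> (c \<gamma>))) (V \<gamma>)) \<and>
           is_orthogonal_rep \<Gamma> d c pr (ell2 \<Gamma> c \<tau>) \<tau> V))"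
proof -
  interpret semigroupoid_left_regular \<Gamma> d c pr \<tau> S
    by unfold_locales (rule sg)
  have left_cancellative: "inj_on (pr \<gamma>) (fibre \<Gamma> c (d \<gamma>))"
    if "\<forall>\<gamma> \<in> \<Gamma>. \<forall>\<beta> \<in> fibre \<Gamma> c (d \<gamma>). \<forall>\<beta>' \<in> fibre \<Gamma> c (d \<gamma>). \<beta> \<noteq> \<beta>' \<longrightarrow> pr \<gamma> \<beta> \<noteq> pr \<gamma> \<beta>'"
      and "\<gamma> \<in> \<Gamma>" for \<gamma>
    using that unfolding inj_on_def by blast
  show ?thesis
    using delta_in_adj_dom_if_finite_pre adj_dom_orthogonal_delta_if_infinite_pre
      closable_iff_finite_pre bounded_iff_card_pre_bounded op_norm_Lop_le
      Lop_partial_isometry orthogonal_rep_if_left_cancellative left_cancellative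
    by (intro conjI ballI impI allI exI[of _ "Lop \<Gamma> d c pr"]) blast+
qed

end
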